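(* There is an absolute constant $C>0$ such that for every complex-valued $f\in L^2(-1,1)$ with compact support in $(-1,1)$, with $u$ the associated wave field defined in the context, $$\|f\|_{L^2(-1,1)}^2\le C\int_0^\infty \omega^2\big(|u(-1,\omega)|^2+|u(1,\omega)|^2\big)\,d\omega.$$
   Context: For a complex-valued $f\in L^2(-1,1)$ with compact support in $(-1,1)$ and a frequency $\omega>0$, the wave field is $$u(x,\omega)=\int_{-1}^1 \frac{i\,e^{i\omega|x-y|}}{2\omega}\,f(y)\,dy,\qquad x\in[-1,1].$$ This is the solution of the one-dimensional Helmholtz equation $u''+\omega^2u=f$ on $(-1,1)$ with the outgoing conditions $u'(-1,\omega)+i\omega u(-1,\omega)=0$ and $u'(1,\omega)-i\omega u(1,\omega)=0$. *)

theory Defs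
  imports "HOL-Analysis.Analysis"
begin

definition wave_field :: "(real \<Rightarrow> complex) \<Rightarrow> real \<Rightarrow> real \<Rightarrow> complex" where
  "wave_field f x \<omega> =
     (LINT y:{-1..1}|lborel.
        (\<i> * exp (\<i> * complex_of_real (\<omega> * \<bar>x - y\<bar>)) / complex_of_real (2 * \<omega>)) * f y)"

end

theory Submission
  imports Defs "HOL-Probability.Probability"
begin

text \<open>
  Let \<open>F\<close> be \<open>f\<close> restricted to \<open>(-1,1)\<close> and \<open>G\<close> its Fourier transform. For \<open>\<omega> > 0\<close> both
  boundary values of \<open>u\<close> are \<open>\<i> exp (\<i>\<omega>) / (2\<omega>)\<close> times \<open>G(\<mp>\<omega>)\<close>, so the right-hand side
  equals \<open>C/4 \<cdot> \<integral>|G|\<^sup>2\<close>, and it remains to bound \<open>\<integral>|F|\<^sup>2\<close> by \<open>\<integral>|G|\<^sup>2\<close>: one half of Plancherel's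
  theorem, which we prove up to a constant. Weighting \<open>|G(w)|\<^sup>2\<close> with the Gaussian window
  \<open>exp (-(w/R)\<^sup>2/2)\<close>, Fubini turns this windowed energy into the quadratic form of \<open>F\<close> against
  a Gaussian kernel of mass \<open>2\<pi>\<close> and width \<open>1/R\<close>. Schur's test bounds that form by \<open>2\<pi>\<integral>|F|\<^sup>2\<close>,
  and for continuous compactly supported \<open>F\<close> it tends to \<open>2\<pi>\<integral>|F|\<^sup>2\<close> as \<open>R \<rightarrow> \<infinity>\<close>.
  Approximating \<open>F\<close> in \<open>L\<^sup>2\<close> by such functions gives \<open>\<integral>|F|\<^sup>2 \<le> (2/\<pi>) \<integral>|G|\<^sup>2\<close>, and \<open>C = 8/\<pi>\<close> works.
\<close>

lemma borel_measurable_cnj [measurable]: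
  "f \<in> borel_measurable M \<Longrightarrow> (\<lambda>x. cnj (f x)) \<in> borel_measurable M"
  by (rule borel_measurable_continuous_on[where f=cnj]) (auto intro!: continuous_intros)

lemma iexp_mult_cnj_iexp: "iexp a * cnj (iexp b) = iexp (a - b)"
  by (simp add: exp_cnj exp_add[symmetric] algebra_simps)

lemma le_two_sq_plus_two_sq:
  fixes a b c :: "'a::real_normed_vector"
  shows "(norm (a - c))\<^sup>2 \<le> 2 * (norm (a - b))\<^sup>2 + 2 * (norm (b - c))\<^sup>2"
proof -
  have "norm (a - c) \<le> norm (a - b) + norm (b - c)"
    using norm_triangle_ineq[of "a - b" "b - c"] by simp
  then have "(norm (a - c))\<^sup>2 \<le> (norm (a - b) + norm (b - c))\<^sup>2"
    by (intro power_mono) auto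
  also have "\<dots> \<le> 2 * (norm (a - b))\<^sup>2 + 2 * (norm (b - c))\<^sup>2"
    using sum_squares_bound[of "norm (a - b)" "norm (b - c)"]
    by (simp add: power2_eq_square algebra_simps)
  finally show ?thesis .
qed

lemma
  fixes a b c :: "'a \<Rightarrow> 'b::{banach, second_countable_topology}"
  assumes [measurable]: "a \<in> borel_measurable M" "c \<in> borel_measurable M"
    and ab: "integrable M (\<lambda>x. (norm (a x - b x))\<^sup>2)" and bc: "integrable M (\<lambda>x. (norm (b x - c x))\<^sup>2)"
  shows integrable_norm_sq_diff_trans: "integrable M (\<lambda>x. (norm (a x - c x))\<^sup>2)"
    and integral_norm_sq_diff_le:
      "(LINT x|M. (norm (a x - c x))\<^sup>2) \<le> 2 * (LINT x|M. (norm (a x - b x))\<^sup>2) + 2 * (LINT x|M. (norm (b x - c x))\<^sup>2)"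
proof -
  have split: "integrable M (\<lambda>x. 2 * (norm (a x - b x))\<^sup>2 + 2 * (norm (b x - c x))\<^sup>2)"
    using ab bc by simp
  show ac: "integrable M (\<lambda>x. (norm (a x - c x))\<^sup>2)"
    by (rule Bochner_Integration.integrable_bound[OF split])
       (auto intro!: AE_I2 order_trans[OF le_two_sq_plus_two_sq])
  have "(LINT x|M. (norm (a x - c x))\<^sup>2) \<le> (LINT x|M. 2 * (norm (a x - b x))\<^sup>2 + 2 * (norm (b x - c x))\<^sup>2)"
    using ac split le_two_sq_plus_two_sq by (rule integral_mono)
  then show "(LINT x|M. (norm (a x - c x))\<^sup>2) \<le> 2 * (LINT x|M. (norm (a x - b x))\<^sup>2) + 2 * (LINT x|M. (norm (b x - c x))\<^sup>2)"
    using ab bc by simp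
qed

lemma ennreal_norm_integral_le_nn_integral:
  fixes f :: "'a \<Rightarrow> 'b::{banach, second_countable_topology}"
  shows "ennreal (norm (integral\<^sup>L M f)) \<le> (\<integral>\<^sup>+x. norm (f x) \<partial>M)"
  by (cases "integrable M f") (auto intro: integral_norm_bound_ennreal simp: not_integrable_integral_eq)

lemma integrable_bounded_support:
  fixes f :: "real \<Rightarrow> 'a::{banach, second_countable_topology}"
  assumes [measurable]: "f \<in> borel_measurable borel"
    and bound: "\<And>x. norm (f x) \<le> B" and support: "\<And>x. L < \<bar>x\<bar> \<Longrightarrow> f x = 0"
  shows "integrable lborel f"
proof (rule Bochner_Integration.integrable_bound)
  show "integrable lborel (\<lambda>x::real. B * indicator {-L..L} x)"
    by (intro integrable_mult_right) (simp add: integrable_indicator_iff emeasure_lborel_Icc_eq)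
  show "AE x in lborel. norm (f x) \<le> norm (B * indicator {-L..L} x :: real)"
  proof (rule AE_I2)
    fix x
    have "0 \<le> B" using order_trans[OF norm_ge_zero bound] .
    then show "norm (f x) \<le> norm (B * indicator {-L..L} x :: real)"
      using bound[of x] support[of x] by (cases "x \<in> {-L..L}") auto
  qed
qed simp

lemma integrable_lborel_pair_product_bound:
  fixes f :: "real \<times> real \<Rightarrow> 'a::{banach, second_countable_topology}"
  assumes f [measurable]: "f \<in> borel_measurable (lborel \<Otimes>\<^sub>M lborel)"
    and p: "integrable lborel p" and q: "integrable lborel q"
    and p_nonneg: "\<And>a. p a \<ge> 0" and q_nonneg: "\<And>b. q b \<ge> 0"
    and bound: "\<And>a b. norm (f (a, b)) \<le> p a * q b"
  shows "integrable (lborel \<Otimes>\<^sub>M lborel) f"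
proof (rule lborel_pair.Fubini_integrable[OF f])
  have [measurable]: "p \<in> borel_measurable borel" "q \<in> borel_measurable borel"
    using p q by auto
  have slice: "integrable lborel (\<lambda>y. f (x, y))" for x
    by (rule Bochner_Integration.integrable_bound[where f="\<lambda>y. p x * q y"])
       (auto intro!: integrable_mult_right q AE_I2 order_trans[OF bound])
  then show "AE x in lborel. integrable lborel (\<lambda>y. f (x, y))"
    by simp
  show "integrable lborel (\<lambda>x. LINT y|lborel. norm (f (x, y)))"
  proof (rule Bochner_Integration.integrable_bound[where f="\<lambda>x. p x * (LINT y|lborel. q y)"])
    show "integrable lborel (\<lambda>x. p x * (LINT y|lborel. q y))"
      using p by simp
    show "AE x in lborel. norm (LINT y|lborel. norm (f (x, y))) \<le> norm (p x * (LINT y|lborel. q y))"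
    proof (rule AE_I2)
      fix x
      have "(LINT y|lborel. norm (f (x, y))) \<le> (LINT y|lborel. p x * q y)"
        using slice q bound by (intro integral_mono) auto
      then show "norm (LINT y|lborel. norm (f (x, y))) \<le> norm (p x * (LINT y|lborel. q y))"
        using p_nonneg[of x] q_nonneg by (simp add: integral_nonneg)
    qed
  qed measurable
qed

section \<open>Fourier transform and Gaussian window\<close>

definition fourier_transform :: "(real \<Rightarrow> complex) \<Rightarrow> real \<Rightarrow> complex" where
  "fourier_transform k w = (LINT y|lborel. iexp (w * y) * k y)"

definition gauss_window :: "real \<Rightarrow> real \<Rightarrow> real" where
  "gauss_window R w = exp (- ((w / R)\<^sup>2) / 2)"

definition gauss_kernel :: "real \<Rightarrow> real \<Rightarrow> real" where
  "gauss_kernel R t = 2 * pi * normal_density 0 (1 / R) t"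

lemma fourier_transform_measurable [measurable]:
  assumes [measurable]: "k \<in> borel_measurable borel"
  shows "fourier_transform k \<in> borel_measurable borel"
  unfolding fourier_transform_def[abs_def] by measurable

lemma integrable_fourier_integrand:
  assumes k: "integrable lborel k"
  shows "integrable lborel (\<lambda>y. iexp (w * y) * k y)"
proof -
  have [measurable]: "k \<in> borel_measurable borel" using k by auto
  show ?thesis
    by (rule Bochner_Integration.integrable_bound[OF integrable_norm[OF k]]) (auto simp: norm_mult)
qed

lemma norm_fourier_transform_le:
  assumes "integrable lborel k"
  shows "norm (fourier_transform k w) \<le> (LINT y|lborel. norm (k y))"
  unfolding fourier_transform_def
  using integral_norm_bound[of lborel "\<lambda>y. iexp (w * y) * k y"] by (simp add: norm_mult)

lemma fourier_transform_diff:
  assumes "integrable lborel a" "integrable lborel b"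
  shows "fourier_transform (\<lambda>x. a x - b x) w = fourier_transform a w - fourier_transform b w"
  unfolding fourier_transform_def
  using integrable_fourier_integrand[OF assms(1)] integrable_fourier_integrand[OF assms(2)]
  by (simp add: right_diff_distrib)

lemma gauss_window_nonneg: "gauss_window R w \<ge> 0"
  and gauss_window_le_one: "gauss_window R w \<le> 1"
  unfolding gauss_window_def by auto

lemma gauss_window_measurable [measurable]: "gauss_window R \<in> borel_measurable borel"
  unfolding gauss_window_def by measurable

lemma integrable_gauss_window:
  assumes "R > 0"
  shows "integrable lborel (gauss_window R)"
proof -
  have "gauss_window R = (\<lambda>w. sqrt (2 * pi * R\<^sup>2) * normal_density 0 R w)"
    using assms by (auto simp: gauss_window_def normal_density_def power_divide)
  then show ?thesis using assms by simp
qed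

lemma gauss_kernel_nonneg: "gauss_kernel R t \<ge> 0"
  unfolding gauss_kernel_def by simp

lemma gauss_kernel_measurable [measurable]:
  "f \<in> borel_measurable M \<Longrightarrow> (\<lambda>x. gauss_kernel R (f x)) \<in> borel_measurable M"
  unfolding gauss_kernel_def by measurable

lemma gauss_kernel_diff: "gauss_kernel R (x - y) = 2 * pi * normal_density x (1 / R) y"
  unfolding gauss_kernel_def normal_density_def by (simp add: power2_commute)

lemma gauss_kernel_minus [simp]: "gauss_kernel R (- t) = gauss_kernel R t"
  unfolding gauss_kernel_def normal_density_def by simp

lemma gauss_kernel_scaled:
  assumes "R > 0"
  shows "gauss_kernel R (s / R) = 2 * pi * R * std_normal_density s"
  using assms unfolding gauss_kernel_def normal_density_def
  by (simp add: real_sqrt_mult real_sqrt_divide power_divide field_simps)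

lemma nn_integral_gauss_kernel:
  assumes "R > 0"
  shows "(\<integral>\<^sup>+y. ennreal (gauss_kernel R (x - y)) \<partial>lborel) = ennreal (2 * pi)"
proof -
  have "(\<integral>\<^sup>+y. ennreal (normal_density x (1 / R) y) \<partial>lborel) = 1"
    using assms by (subst nn_integral_eq_integral) auto
  then show ?thesis
    unfolding gauss_kernel_diff by (simp add: ennreal_mult nn_integral_cmult)
qed

text \<open>The window \<open>gauss_window R\<close> tends to \<open>1\<close> as \<open>R \<rightarrow> \<infinity>\<close>; its Fourier transform \<open>gauss_kernel R\<close>
  is \<open>2\<pi>\<close> times a Gaussian density of variance \<open>1/R\<^sup>2\<close>, i.e.\ an approximate identity.\<close>

lemma fourier_gauss_window:
  assumes R: "R > 0"
  shows "(LINT w|lborel. complex_of_real (gauss_window R w) * iexp (w * t))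
    = complex_of_real (gauss_kernel R t)"
proof -
  have "char std_normal_distribution (R * t) = complex_of_real (exp (- ((R * t)\<^sup>2) / 2))"
    by (simp add: char_std_normal_distribution)
  moreover have "char std_normal_distribution (R * t) =
      (LINT x|lborel. std_normal_density x *\<^sub>R iexp (R * t * x))"
    unfolding char_def by (subst integral_density) auto
  moreover have "(LINT w|lborel. complex_of_real (gauss_window R w) * iexp (w * t)) =
      \<bar>R\<bar> *\<^sub>R (LINT x|lborel. complex_of_real (gauss_window R (0 + R * x)) * iexp ((0 + R * x) * t))"
    by (rule lborel_integral_real_affine) (use R in auto)
  moreover have "complex_of_real (gauss_window R (0 + R * x)) * iexp ((0 + R * x) * t)
      = complex_of_real (sqrt (2 * pi)) * (std_normal_density x *\<^sub>R iexp (R * t * x))" for x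
    using R by (simp add: gauss_window_def std_normal_density_def scaleR_conv_of_real mult_ac)
  ultimately have "(LINT w|lborel. complex_of_real (gauss_window R w) * iexp (w * t)) =
      complex_of_real (R * sqrt (2 * pi) * exp (- ((R * t)\<^sup>2) / 2))"
    using R by (simp add: scaleR_conv_of_real)
  also have "R * sqrt (2 * pi) * exp (- ((R * t)\<^sup>2) / 2) = gauss_kernel R t"
    using R unfolding gauss_kernel_def normal_density_def
    by (simp add: real_sqrt_mult power_divide field_simps real_sqrt_divide)
  finally show ?thesis .
qed

section \<open>Windowed energy as a Gaussian kernel form\<close>

definition windowed_energy :: "real \<Rightarrow> (real \<Rightarrow> complex) \<Rightarrow> real" where
  "windowed_energy R k = (LINT w|lborel. gauss_window R w * (norm (fourier_transform k w))\<^sup>2)"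

lemma integrable_windowed_energy:
  assumes k: "integrable lborel k" and R: "R > 0"
  shows "integrable lborel (\<lambda>w. gauss_window R w * (norm (fourier_transform k w))\<^sup>2)"
proof (rule Bochner_Integration.integrable_bound)
  have [measurable]: "k \<in> borel_measurable borel" using k by auto
  define L where "L = (LINT y|lborel. norm (k y))"
  have fourier_sq_le: "(norm (fourier_transform k w))\<^sup>2 \<le> L\<^sup>2" for w
    using norm_fourier_transform_le[OF k, of w] unfolding L_def by (intro power_mono) auto
  show "integrable lborel (\<lambda>w. gauss_window R w * L\<^sup>2)"
    using integrable_gauss_window[OF R] by simp
  show "AE w in lborel. norm (gauss_window R w * (norm (fourier_transform k w))\<^sup>2) \<le> norm (gauss_window R w * L\<^sup>2)"
    using mult_left_mono[OF fourier_sq_le gauss_window_nonneg] by (simp add: gauss_window_nonneg)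
  show "(\<lambda>w. gauss_window R w * (norm (fourier_transform k w))\<^sup>2) \<in> borel_measurable lborel"
    by measurable
qed

lemma windowed_energy_nonneg: "windowed_energy R k \<ge> 0"
  unfolding windowed_energy_def by (auto intro!: integral_nonneg simp: gauss_window_nonneg)

lemma windowed_energy_le_nn_integral_fourier:
  assumes "integrable lborel k" "R > 0"
  shows "ennreal (windowed_energy R k) \<le> (\<integral>\<^sup>+w. ennreal ((norm (fourier_transform k w))\<^sup>2) \<partial>lborel)"
proof -
  have "ennreal (windowed_energy R k)
      = (\<integral>\<^sup>+w. ennreal (gauss_window R w * (norm (fourier_transform k w))\<^sup>2) \<partial>lborel)"
    unfolding windowed_energy_def using integrable_windowed_energy[OF assms]
    by (subst nn_integral_eq_integral) (auto simp: gauss_window_nonneg)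
  also have "\<dots> \<le> (\<integral>\<^sup>+w. ennreal ((norm (fourier_transform k w))\<^sup>2) \<partial>lborel)"
    by (intro nn_integral_mono ennreal_leI)
       (simp add: mult_left_le_one_le gauss_window_nonneg gauss_window_le_one)
  finally show ?thesis .
qed

lemma gauss_window_mult_norm_fourier_sq:
  "complex_of_real (gauss_window R w * (norm (fourier_transform k w))\<^sup>2)
    = (LINT x|lborel. LINT y|lborel.
        complex_of_real (gauss_window R w) * (k x * cnj (k y)) * iexp (w * (x - y)))"
proof -
  have phase: "complex_of_real (gauss_window R w) * (k x * cnj (k y)) * iexp (w * (x - y))
      = complex_of_real (gauss_window R w) * ((iexp (w * x) * k x) * cnj (iexp (w * y) * k y))" for x y
    using iexp_mult_cnj_iexp[of "w * x" "w * y"] by (simp add: right_diff_distrib mult_ac)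
  have "complex_of_real (gauss_window R w * (norm (fourier_transform k w))\<^sup>2)
      = complex_of_real (gauss_window R w) * (fourier_transform k w * cnj (fourier_transform k w))"
    by (simp add: complex_norm_square del: of_real_power)
  then show ?thesis
    unfolding phase by (simp add: fourier_transform_def del: complex_cnj_mult)
qed

lemma integral_gauss_window_phase:
  assumes "R > 0"
  shows "(LINT w|lborel. complex_of_real (gauss_window R w) * (k x * cnj (k y)) * iexp (w * (x - y)))
    = k x * cnj (k y) * complex_of_real (gauss_kernel R (x - y))"
  using fourier_gauss_window[OF assms, of "x - y"]
  by (simp add: mult_ac integral_mult_right_zero[where c="k x * cnj (k y)", symmetric])

lemma windowed_energy_eq_kernel_form:
  assumes k: "integrable lborel k" and R: "R > 0"
  shows "complex_of_real (windowed_energy R k)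
    = (LINT x|lborel. LINT y|lborel. k x * cnj (k y) * complex_of_real (gauss_kernel R (x - y)))"
proof -
  have [measurable]: "k \<in> borel_measurable borel" using k by auto
  define \<Phi> where "\<Phi> w x y = complex_of_real (gauss_window R w) * (k x * cnj (k y)) * iexp (w * (x - y))"
    for w x y
  define L where "L = (LINT y|lborel. norm (k y))"
  have norm_\<Phi>: "norm (\<Phi> w x y) = gauss_window R w * (norm (k x) * norm (k y))" for w x y
    unfolding \<Phi>_def using gauss_window_nonneg[of R w] by (simp add: norm_mult)
  have integrable_norm_k: "integrable lborel (\<lambda>y. norm (k y))" using k by auto
  have \<Phi>_measurable [measurable]: "(\<lambda>(w, y). \<Phi> w x y) \<in> borel_measurable (lborel \<Otimes>\<^sub>M lborel)"
    "(\<lambda>(w, x). LINT y|lborel. \<Phi> w x y) \<in> borel_measurable (lborel \<Otimes>\<^sub>M lborel)" for x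
    unfolding \<Phi>_def by measurable
  have swap_inner: "(LINT w|lborel. LINT y|lborel. \<Phi> w x y) = (LINT y|lborel. LINT w|lborel. \<Phi> w x y)" for x
    by (rule lborel_pair.Fubini_integral[symmetric],
        rule integrable_lborel_pair_product_bound[where p="gauss_window R" and q="\<lambda>y. norm (k x) * norm (k y)"])
       (use integrable_gauss_window[OF R] integrable_norm_k in \<open>auto simp: norm_\<Phi> gauss_window_nonneg\<close>)
  have norm_inner: "norm (LINT y|lborel. \<Phi> w x y) \<le> gauss_window R w * (norm (k x) * L)" for w x
  proof -
    have "norm (LINT y|lborel. \<Phi> w x y) \<le> (LINT y|lborel. norm (\<Phi> w x y))"
      by (rule integral_norm_bound)
    also have "\<dots> = gauss_window R w * (norm (k x) * L)"
      unfolding norm_\<Phi> L_def by simp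
    finally show ?thesis .
  qed
  have swap_outer: "(LINT w|lborel. LINT x|lborel. LINT y|lborel. \<Phi> w x y)
      = (LINT x|lborel. LINT w|lborel. LINT y|lborel. \<Phi> w x y)"
  proof (rule lborel_pair.Fubini_integral[symmetric])
    have "L \<ge> 0" unfolding L_def by simp
    then show "integrable (lborel \<Otimes>\<^sub>M lborel) (\<lambda>(w, x). LINT y|lborel. \<Phi> w x y)"
      using integrable_gauss_window[OF R] integrable_norm_k norm_inner
      by (intro integrable_lborel_pair_product_bound[where p="gauss_window R" and q="\<lambda>x. norm (k x) * L"])
         (auto simp: gauss_window_nonneg)
  qed
  have "complex_of_real (windowed_energy R k)
      = (LINT w|lborel. LINT x|lborel. LINT y|lborel. \<Phi> w x y)"
    unfolding windowed_energy_def \<Phi>_def gauss_window_mult_norm_fourier_sq[symmetric]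
    by (rule integral_complex_of_real[symmetric])
  also have "\<dots> = (LINT x|lborel. LINT y|lborel. LINT w|lborel. \<Phi> w x y)"
    unfolding swap_outer swap_inner ..
  also have "\<dots> = (LINT x|lborel. LINT y|lborel. k x * cnj (k y) * complex_of_real (gauss_kernel R (x - y)))"
    unfolding \<Phi>_def integral_gauss_window_phase[OF R] ..
  finally show ?thesis .
qed

lemma nn_integral_gauss_kernel_weighted:
  assumes [measurable]: "\<phi> \<in> borel_measurable borel" and \<phi>_nonneg: "\<And>x. \<phi> x \<ge> 0" and R: "R > 0"
  shows "(\<integral>\<^sup>+x. \<integral>\<^sup>+y. ennreal (\<phi> x * gauss_kernel R (x - y)) \<partial>lborel \<partial>lborel)
    = ennreal (2 * pi) * (\<integral>\<^sup>+x. ennreal (\<phi> x) \<partial>lborel)"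
proof -
  have "(\<integral>\<^sup>+y. ennreal (\<phi> x * gauss_kernel R (x - y)) \<partial>lborel) = ennreal (2 * pi) * ennreal (\<phi> x)" for x
    using nn_integral_gauss_kernel[OF R, of x] \<phi>_nonneg[of x]
    by (simp add: ennreal_mult gauss_kernel_nonneg nn_integral_cmult mult.commute)
  then show ?thesis
    by (simp add: nn_integral_cmult)
qed

lemma nn_integral_gauss_kernel_swap:
  assumes [measurable]: "\<phi> \<in> borel_measurable borel"
  shows "(\<integral>\<^sup>+x. \<integral>\<^sup>+y. ennreal (\<phi> y * gauss_kernel R (x - y)) \<partial>lborel \<partial>lborel)
    = (\<integral>\<^sup>+x. \<integral>\<^sup>+y. ennreal (\<phi> x * gauss_kernel R (x - y)) \<partial>lborel \<partial>lborel)"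
proof -
  have "(\<integral>\<^sup>+x. \<integral>\<^sup>+y. ennreal (\<phi> y * gauss_kernel R (x - y)) \<partial>lborel \<partial>lborel)
      = (\<integral>\<^sup>+y. \<integral>\<^sup>+x. ennreal (\<phi> y * gauss_kernel R (x - y)) \<partial>lborel \<partial>lborel)"
    by (rule lborel_pair.Fubini'[symmetric]) measurable
  also have "\<dots> = (\<integral>\<^sup>+y. \<integral>\<^sup>+x. ennreal (\<phi> y * gauss_kernel R (y - x)) \<partial>lborel \<partial>lborel)"
    using gauss_kernel_minus[of R "y - x" for x y] by simp
  finally show ?thesis .
qed

lemma ennreal_mult_le_half_sq_add_sq:
  fixes a b g :: real
  assumes g: "g \<ge> 0"
  shows "ennreal (a * b * g) \<le> ennreal (1 / 2) * (ennreal (a\<^sup>2 * g) + ennreal (b\<^sup>2 * g))"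
proof -
  have "a * b \<le> (a\<^sup>2 + b\<^sup>2) / 2"
    using sum_squares_bound[of a b] by (simp add: power2_eq_square)
  then have "a * b * g \<le> 1 / 2 * (a\<^sup>2 * g + b\<^sup>2 * g)"
    using mult_right_mono[OF _ g] by (fastforce simp: field_simps)
  then have "ennreal (a * b * g) \<le> ennreal (1 / 2 * (a\<^sup>2 * g + b\<^sup>2 * g))"
    by (rule ennreal_leI)
  then show ?thesis
    using g by (simp only: ennreal_mult'[symmetric] ennreal_plus[symmetric] zero_le_power2 mult_nonneg_nonneg)
qed

lemma norm_gauss_kernel_form_le:
  fixes k :: "real \<Rightarrow> complex"
  assumes [measurable]: "k \<in> borel_measurable borel" and R: "R > 0"
  shows "ennreal (norm (LINT x|lborel. LINT y|lborel. k x * cnj (k y) * complex_of_real (gauss_kernel R (x - y))))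
    \<le> ennreal (2 * pi) * (\<integral>\<^sup>+x. ennreal ((norm (k x))\<^sup>2) \<partial>lborel)"
proof -
  let ?g = "\<lambda>x y. gauss_kernel R (x - y)"
  define A where "A = (\<integral>\<^sup>+x. \<integral>\<^sup>+y. ennreal ((norm (k x))\<^sup>2 * ?g x y) \<partial>lborel \<partial>lborel)"
  have A: "A = ennreal (2 * pi) * (\<integral>\<^sup>+x. ennreal ((norm (k x))\<^sup>2) \<partial>lborel)"
    unfolding A_def by (rule nn_integral_gauss_kernel_weighted[OF _ _ R]) auto
  have "ennreal (norm (LINT x|lborel. LINT y|lborel. k x * cnj (k y) * complex_of_real (?g x y)))
      \<le> (\<integral>\<^sup>+x. \<integral>\<^sup>+y. ennreal (norm (k x) * norm (k y) * ?g x y) \<partial>lborel \<partial>lborel)"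
  proof -
    have inner: "ennreal (norm (LINT y|lborel. k x * cnj (k y) * complex_of_real (?g x y)))
        \<le> (\<integral>\<^sup>+y. ennreal (norm (k x) * norm (k y) * ?g x y) \<partial>lborel)" for x
      using ennreal_norm_integral_le_nn_integral[of lborel "\<lambda>y. k x * cnj (k y) * complex_of_real (?g x y)"]
      by (simp add: norm_mult gauss_kernel_nonneg)
    show ?thesis
      by (rule order_trans[OF ennreal_norm_integral_le_nn_integral nn_integral_mono]) (rule inner)
  qed
  also have "\<dots> \<le> (\<integral>\<^sup>+x. \<integral>\<^sup>+y. ennreal (1 / 2) *
      (ennreal ((norm (k x))\<^sup>2 * ?g x y) + ennreal ((norm (k y))\<^sup>2 * ?g x y)) \<partial>lborel \<partial>lborel)"
    using ennreal_mult_le_half_sq_add_sq[OF gauss_kernel_nonneg] by (intro nn_integral_mono) simp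
  also have "\<dots> = ennreal (1 / 2) * (A + A)"
    unfolding A_def
    by (simp add: nn_integral_cmult nn_integral_add nn_integral_gauss_kernel_swap[where \<phi>="\<lambda>y. (norm (k y))\<^sup>2"])
  also have "\<dots> = A"
  proof -
    have "ennreal (1 / 2) * ennreal 2 = 1"
      by (subst ennreal_mult[symmetric]) simp_all
    then show ?thesis
      by (simp only: mult_2[symmetric] mult.assoc[symmetric] ennreal_numeral[symmetric]) simp
  qed
  finally show ?thesis unfolding A .
qed

lemma windowed_energy_le_L2:
  assumes k: "integrable lborel k" and k2: "integrable lborel (\<lambda>x. (norm (k x))\<^sup>2)" and R: "R > 0"
  shows "windowed_energy R k \<le> 2 * pi * (LINT x|lborel. (norm (k x))\<^sup>2)"
proof -
  have [measurable]: "k \<in> borel_measurable borel" using k by auto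
  have "ennreal (windowed_energy R k) = ennreal (norm (complex_of_real (windowed_energy R k)))"
    using windowed_energy_nonneg[of R k] by simp
  also have "\<dots> \<le> ennreal (2 * pi) * (\<integral>\<^sup>+x. ennreal ((norm (k x))\<^sup>2) \<partial>lborel)"
    unfolding windowed_energy_eq_kernel_form[OF k R] by (rule norm_gauss_kernel_form_le[OF _ R]) simp
  also have "\<dots> = ennreal (2 * pi * (LINT x|lborel. (norm (k x))\<^sup>2))"
    using k2 by (subst nn_integral_eq_integral) (auto simp: ennreal_mult)
  finally show ?thesis
    by (subst (asm) ennreal_le_iff) (auto intro!: mult_nonneg_nonneg integral_nonneg)
qed

section \<open>The Gaussian kernel as an approximate identity\<close>

lemma integral_gauss_kernel_rescale:
  fixes g :: "real \<Rightarrow> complex"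
  assumes R: "R > 0"
  shows "(LINT y|lborel. g y * complex_of_real (gauss_kernel R (x - y)))
    = complex_of_real (2 * pi) * (LINT s|lborel. complex_of_real (std_normal_density s) * g (x + s / R))"
proof -
  have "(LINT y|lborel. g y * complex_of_real (gauss_kernel R (x - y)))
      = \<bar>1 / R\<bar> *\<^sub>R (LINT s|lborel. g (x + 1 / R * s) * complex_of_real (gauss_kernel R (x - (x + 1 / R * s))))"
    by (rule lborel_integral_real_affine) (use R in auto)
  also have "\<dots> = \<bar>1 / R\<bar> *\<^sub>R (LINT s|lborel. complex_of_real (2 * pi * R) *
      (complex_of_real (std_normal_density s) * g (x + s / R)))"
    using gauss_kernel_scaled[OF R] gauss_kernel_minus[of R "s / R" for s] by (simp add: mult_ac)
  also have "\<dots> = complex_of_real (2 * pi) * (LINT s|lborel. complex_of_real (std_normal_density s) * g (x + s / R))"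
    using R by (simp add: scaleR_conv_of_real)
  finally show ?thesis .
qed

lemma norm_std_normal_mollifier_le:
  fixes g :: "real \<Rightarrow> complex"
  assumes [measurable]: "g \<in> borel_measurable borel" and bound: "\<And>x. norm (g x) \<le> B"
  shows "norm (LINT s|lborel. complex_of_real (std_normal_density s) * g (x + s / R)) \<le> B"
proof -
  have integrable_bound: "integrable lborel (\<lambda>s. B * std_normal_density s)"
    by simp
  have pointwise: "norm (complex_of_real (std_normal_density s) * g (x + s / R)) \<le> B * std_normal_density s" for s
    using mult_right_mono[OF bound, of "std_normal_density s"]
    by (simp add: norm_mult mult.commute[of "std_normal_density s"])
  have integrable: "integrable lborel (\<lambda>s. complex_of_real (std_normal_density s) * g (x + s / R))"
    by (rule Bochner_Integration.integrable_bound[OF integrable_bound]) (auto intro!: AE_I2 order_trans[OF pointwise])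
  have "norm (LINT s|lborel. complex_of_real (std_normal_density s) * g (x + s / R))
      \<le> (LINT s|lborel. B * std_normal_density s)"
    using integral_norm_bound integral_mono[OF integrable_norm[OF integrable] integrable_bound pointwise]
    by (rule order_trans)
  then show ?thesis
    by simp
qed

lemma tendsto_std_normal_mollifier:
  fixes g :: "real \<Rightarrow> complex"
  assumes cont: "continuous_on UNIV g" and bound: "\<And>x. norm (g x) \<le> B"
  shows "(\<lambda>n. LINT s|lborel. complex_of_real (std_normal_density s) * g (x + s / real (Suc n))) \<longlonglongrightarrow> g x"
proof -
  have [measurable]: "g \<in> borel_measurable borel"
    using cont by (rule borel_measurable_continuous_onI)
  have "(\<lambda>n. LINT s|lborel. complex_of_real (std_normal_density s) * g (x + s / real (Suc n)))
      \<longlonglongrightarrow> (LINT s|lborel. complex_of_real (std_normal_density s) * g x)"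
  proof (rule integral_dominated_convergence[where w="\<lambda>s. B * std_normal_density s"])
    show "AE s in lborel. norm (complex_of_real (std_normal_density s) * g (x + s / real (Suc n)))
        \<le> B * std_normal_density s" for n
      using mult_right_mono[OF bound, of "std_normal_density s" for s]
      by (intro AE_I2) (simp add: norm_mult mult.commute[of "std_normal_density s" for s])
    show "AE s in lborel. (\<lambda>n. complex_of_real (std_normal_density s) * g (x + s / real (Suc n)))
        \<longlonglongrightarrow> complex_of_real (std_normal_density s) * g x"
    proof (rule AE_I2)
      fix s
      have "(\<lambda>n. x + s / real (Suc n)) \<longlonglongrightarrow> x + 0"
        by (intro tendsto_intros LIMSEQ_Suc[OF lim_const_over_n])
      then have "(\<lambda>n. g (x + s / real (Suc n))) \<longlonglongrightarrow> g x"
        using cont by (auto intro: continuous_on_tendsto_compose[where s=UNIV])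
      then show "(\<lambda>n. complex_of_real (std_normal_density s) * g (x + s / real (Suc n)))
          \<longlonglongrightarrow> complex_of_real (std_normal_density s) * g x"
        by (intro tendsto_intros)
    qed
  qed auto
  then show ?thesis by simp
qed

lemma windowed_energy_eq_mollified:
  fixes h :: "real \<Rightarrow> complex"
  assumes h: "integrable lborel h" and R: "R > 0"
  shows "complex_of_real (windowed_energy R h) = (LINT x|lborel. complex_of_real (2 * pi) *
    (h x * (LINT s|lborel. complex_of_real (std_normal_density s) * cnj (h (x + s / R)))))"
proof -
  have "complex_of_real (windowed_energy R h)
      = (LINT x|lborel. h x * (LINT y|lborel. cnj (h y) * complex_of_real (gauss_kernel R (x - y))))"
    unfolding windowed_energy_eq_kernel_form[OF h R] by (simp add: mult.assoc)
  then show ?thesis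
    unfolding integral_gauss_kernel_rescale[OF R] by (simp add: mult.left_commute)
qed

lemma windowed_energy_tendsto:
  fixes h :: "real \<Rightarrow> complex"
  assumes cont: "continuous_on UNIV h" and bound: "\<And>x. norm (h x) \<le> B"
    and support: "\<And>x. L < \<bar>x\<bar> \<Longrightarrow> h x = 0"
  shows "(\<lambda>n. windowed_energy (real (Suc n)) h) \<longlonglongrightarrow> 2 * pi * (LINT x|lborel. (norm (h x))\<^sup>2)"
proof -
  have [measurable]: "h \<in> borel_measurable borel"
    using cont by (rule borel_measurable_continuous_onI)
  have cnj_cont: "continuous_on UNIV (\<lambda>x. cnj (h x))"
    using cont by (intro continuous_intros)
  define \<psi> where "\<psi> n x = (LINT s|lborel. complex_of_real (std_normal_density s) * cnj (h (x + s / real (Suc n))))"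
    for n x
  have [measurable]: "\<psi> n \<in> borel_measurable borel" for n
    unfolding \<psi>_def by measurable
  have norm_\<psi>_le: "norm (\<psi> n x) \<le> B" for n x
    unfolding \<psi>_def by (rule norm_std_normal_mollifier_le) (measurable, simp add: bound)
  have h_integrable: "integrable lborel h"
    by (rule integrable_bounded_support[OF _ bound support]) measurable
  have energy_eq: "complex_of_real (windowed_energy (real (Suc n)) h)
      = (LINT x|lborel. complex_of_real (2 * pi) * (h x * \<psi> n x))" for n
    unfolding \<psi>_def by (rule windowed_energy_eq_mollified[OF h_integrable]) simp
  have "(\<lambda>n. LINT x|lborel. complex_of_real (2 * pi) * (h x * \<psi> n x))
      \<longlonglongrightarrow> (LINT x|lborel. complex_of_real (2 * pi) * (h x * cnj (h x)))"
  proof (rule integral_dominated_convergence[where w="\<lambda>x. 2 * pi * (B * B) * indicator {-L..L} x"])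
    show "integrable lborel (\<lambda>x. 2 * pi * (B * B) * indicator {-L..L} x)"
      by (intro integrable_mult_right) (simp add: integrable_indicator_iff emeasure_lborel_Icc_eq)
    show "AE x in lborel. norm (complex_of_real (2 * pi) * (h x * \<psi> n x))
        \<le> 2 * pi * (B * B) * indicator {-L..L} x" for n
    proof (rule AE_I2)
      fix x
      have "norm (h x) * norm (\<psi> n x) \<le> B * B"
        using bound[of x] norm_\<psi>_le[of n x] order_trans[OF norm_ge_zero bound]
        by (intro mult_mono) auto
      then show "norm (complex_of_real (2 * pi) * (h x * \<psi> n x)) \<le> 2 * pi * (B * B) * indicator {-L..L} x"
        using support[of x] by (cases "x \<in> {-L..L}") (auto simp: norm_mult)
    qed
    show "AE x in lborel. (\<lambda>n. complex_of_real (2 * pi) * (h x * \<psi> n x))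
        \<longlonglongrightarrow> complex_of_real (2 * pi) * (h x * cnj (h x))"
      unfolding \<psi>_def
      by (intro AE_I2 tendsto_intros tendsto_std_normal_mollifier[OF cnj_cont, of B]) (simp add: bound)
  qed measurable
  also have "(LINT x|lborel. complex_of_real (2 * pi) * (h x * cnj (h x)))
      = complex_of_real (2 * pi * (LINT x|lborel. (norm (h x))\<^sup>2))"
    by (simp add: complex_norm_square[symmetric] del: of_real_power)
  finally show ?thesis
    unfolding energy_eq[symmetric] tendsto_of_real_iff .
qed

section \<open>Approximation in \<open>L\<^sup>2\<close> by continuous functions\<close>

definition clip :: "real \<Rightarrow> 'a::real_normed_vector \<Rightarrow> 'a" where
  "clip M z = z /\<^sub>R max 1 (norm z / M)"

lemma continuous_on_clip: "continuous_on UNIV (clip M :: 'a::real_normed_vector \<Rightarrow> 'a)"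
  unfolding clip_def divide_inverse by (intro continuous_intros) (auto simp: max_def)

lemma clip_measurable [measurable]:
  "f \<in> borel_measurable N \<Longrightarrow> (\<lambda>x. clip M (f x)) \<in> borel_measurable N"
  by (rule borel_measurable_continuous_on[OF continuous_on_clip])

lemma clip_zero [simp]: "clip M 0 = 0"
  by (simp add: clip_def)

lemma clip_eq_self:
  assumes "M > 0" "norm z \<le> M"
  shows "clip M z = z"
  using assms by (simp add: clip_def max_def field_simps)

lemma norm_clip_le:
  assumes "M > 0"
  shows "norm (clip M z) \<le> M"
proof (cases "norm z \<le> M")
  case True
  then show ?thesis using assms by (simp add: clip_eq_self)
next
  case False
  then have "max 1 (norm z / M) = norm z / M" using assms by (simp add: max_def field_simps)
  then show ?thesis using False assms by (simp add: clip_def)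
qed

lemma norm_diff_clip_le: "norm (z - clip M z) \<le> norm z"
proof -
  define m where "m = max 1 (norm z / M)"
  have "m \<ge> 1" unfolding m_def by simp
  have "z - clip M z = (1 - 1 / m) *\<^sub>R z"
    unfolding clip_def m_def[symmetric] by (simp add: algebra_simps divide_inverse_commute)
  then have "norm (z - clip M z) = \<bar>1 - 1 / m\<bar> * norm z" by simp
  also have "\<dots> \<le> 1 * norm z"
    using \<open>m \<ge> 1\<close> by (intro mult_right_mono) (auto simp: field_simps)
  finally show ?thesis by simp
qed

definition cutoff :: "real \<Rightarrow> real \<Rightarrow> real" where
  "cutoff L x = max 0 (min 1 (L + 1 - \<bar>x\<bar>))"

lemma continuous_on_cutoff: "continuous_on UNIV (cutoff L)"
  unfolding cutoff_def by (intro continuous_intros)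

lemma cutoff_nonneg: "0 \<le> cutoff L x"
  and cutoff_le_one: "cutoff L x \<le> 1"
  and cutoff_eq_one: "\<bar>x\<bar> \<le> L \<Longrightarrow> cutoff L x = 1"
  and cutoff_eq_zero: "L + 1 \<le> \<bar>x\<bar> \<Longrightarrow> cutoff L x = 0"
  unfolding cutoff_def by auto

lemma L2_clip_approx:
  fixes F :: "real \<Rightarrow> 'a::{banach, second_countable_topology}"
  assumes [measurable]: "F \<in> borel_measurable borel"
    and F2: "integrable lborel (\<lambda>x. (norm (F x))\<^sup>2)" and e: "e > 0"
  shows "\<exists>M>0. integrable lborel (\<lambda>x. (norm (F x - clip M (F x)))\<^sup>2)
    \<and> (LINT x|lborel. (norm (F x - clip M (F x)))\<^sup>2) < e"
proof -
  have dominated: "norm ((norm (F x - clip M (F x)))\<^sup>2) \<le> (norm (F x))\<^sup>2" for M x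
    by (auto intro!: power_mono norm_diff_clip_le)
  have "(\<lambda>n. LINT x|lborel. (norm (F x - clip (real (Suc n)) (F x)))\<^sup>2) \<longlonglongrightarrow> (LINT (x::real)|lborel. 0)"
  proof (rule integral_dominated_convergence[OF _ _ F2])
    show "AE x in lborel. (\<lambda>n. (norm (F x - clip (real (Suc n)) (F x)))\<^sup>2) \<longlonglongrightarrow> 0"
    proof (rule AE_I2)
      fix x
      obtain N :: nat where "norm (F x) \<le> real N" using real_arch_simple by blast
      then have "\<forall>n\<ge>N. (norm (F x - clip (real (Suc n)) (F x)))\<^sup>2 = 0"
        by (auto simp: clip_eq_self)
      then show "(\<lambda>n. (norm (F x - clip (real (Suc n)) (F x)))\<^sup>2) \<longlonglongrightarrow> 0"
        by (intro tendsto_eventually) (auto simp: eventually_sequentially)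
    qed
  qed (use dominated in auto)
  then obtain n where "(LINT x|lborel. (norm (F x - clip (real (Suc n)) (F x)))\<^sup>2) < e"
    using e by (auto dest!: LIMSEQ_D[where r=e])
  moreover have "integrable lborel (\<lambda>x. (norm (F x - clip (real (Suc n)) (F x)))\<^sup>2)"
    by (rule Bochner_Integration.integrable_bound[OF F2]) (auto intro!: AE_I2 power_mono norm_diff_clip_le)
  ultimately show ?thesis
    by (intro exI[of _ "real (Suc n)"]) simp
qed

lemma AE_lim_continuous_of_borel_measurable:
  fixes G :: "'a::euclidean_space \<Rightarrow> 'b::euclidean_space"
  assumes "G \<in> borel_measurable borel"
  obtains g where "\<And>n. continuous_on UNIV (g n)" "AE x in lborel. (\<lambda>n. g n x) \<longlonglongrightarrow> G x"
proof -
  have "G \<in> borel_measurable (lebesgue_on UNIV)"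
    using assms by (intro measurable_restrict_space1 measurable_completion) simp
  then have "G measurable_on UNIV"
    by (subst measurable_on_iff_borel_measurable) auto
  then obtain N g where N: "negligible N" and g_cont: "\<And>n. continuous_on UNIV (g n)"
      and g_lim: "\<And>x. x \<notin> N \<Longrightarrow> (\<lambda>n. g n x) \<longlonglongrightarrow> G x"
    unfolding measurable_on_def by auto
  have "AE x in lebesgue. x \<notin> N"
    using N by (intro AE_not_in) (simp add: negligible_iff_null_sets)
  then have "AE x in lborel. (\<lambda>n. g n x) \<longlonglongrightarrow> G x"
    by (simp add: AE_completion_iff) (auto elim!: eventually_mono g_lim)
  with g_cont show ?thesis
    using that by blast
qed

lemma tendsto_integral_bounded_support:
  fixes u :: "nat \<Rightarrow> real \<Rightarrow> 'a::{banach, second_countable_topology}"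
  assumes [measurable]: "\<And>n. u n \<in> borel_measurable borel"
    and bound: "\<And>n x. norm (u n x) \<le> C" and support: "\<And>n x. L < \<bar>x\<bar> \<Longrightarrow> u n x = 0"
    and lim: "AE x in lborel. (\<lambda>n. u n x) \<longlonglongrightarrow> 0"
  shows "(\<lambda>n. LINT x|lborel. u n x) \<longlonglongrightarrow> 0"
proof -
  have "(\<lambda>n. LINT x|lborel. u n x) \<longlonglongrightarrow> (LINT (x::real)|lborel. 0)"
  proof (rule integral_dominated_convergence[OF _ _ _ lim])
    show "integrable lborel (\<lambda>x. C * indicator {-L..L} x)"
      by (intro integrable_mult_right) (simp add: integrable_indicator_iff emeasure_lborel_Icc_eq)
    show "AE x in lborel. norm (u n x) \<le> C * indicator {-L..L} x" for n
    proof (rule AE_I2)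
      fix x
      show "norm (u n x) \<le> C * indicator {-L..L} x"
        using bound[of n x] support[of x n] by (cases "x \<in> {-L..L}") auto
    qed
  qed measurable
  then show ?thesis by simp
qed

lemma L2_continuous_approx_bounded:
  fixes G :: "real \<Rightarrow> 'a::euclidean_space"
  assumes [measurable]: "G \<in> borel_measurable borel"
    and M: "M > 0" and bound: "\<And>x. norm (G x) \<le> M"
    and support: "\<And>x. L < \<bar>x\<bar> \<Longrightarrow> G x = 0" and e: "e > 0"
  shows "\<exists>h. continuous_on UNIV h \<and> (\<forall>x. norm (h x) \<le> M) \<and> (\<forall>x. L + 1 < \<bar>x\<bar> \<longrightarrow> h x = 0)
    \<and> integrable lborel (\<lambda>x. (norm (G x - h x))\<^sup>2) \<and> (LINT x|lborel. (norm (G x - h x))\<^sup>2) < e"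
proof -
  obtain g where g_cont: "\<And>n. continuous_on UNIV (g n)" and g_lim: "AE x in lborel. (\<lambda>n. g n x) \<longlonglongrightarrow> G x"
    using AE_lim_continuous_of_borel_measurable[of G] by auto
  define h where "h n x = cutoff L x *\<^sub>R clip M (g n x)" for n x
  have h_cont: "continuous_on UNIV (h n)" for n
    unfolding h_def
    by (intro continuous_intros continuous_on_compose2[OF continuous_on_clip g_cont]
        continuous_on_compose2[OF continuous_on_cutoff]) auto
  have [measurable]: "h n \<in> borel_measurable borel" for n
    using h_cont by (rule borel_measurable_continuous_onI)
  have h_bound: "norm (h n x) \<le> M" for n x
  proof -
    have "norm (h n x) = cutoff L x * norm (clip M (g n x))"
      using cutoff_nonneg[of L x] by (simp add: h_def)
    also have "\<dots> \<le> 1 * M"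
      using M by (intro mult_mono cutoff_le_one norm_clip_le) simp_all
    finally show ?thesis by simp
  qed
  have h_support: "L + 1 < \<bar>x\<bar> \<Longrightarrow> h n x = 0" for n x
    unfolding h_def by (simp add: cutoff_eq_zero)
  have diff_bound: "norm ((norm (G x - h n x))\<^sup>2) \<le> (2 * M)\<^sup>2" for n x
  proof -
    have "norm (G x - h n x) \<le> 2 * M"
      using norm_triangle_ineq4[of "G x" "h n x"] bound[of x] h_bound[of n x] by simp
    then have "(norm (G x - h n x))\<^sup>2 \<le> (2 * M)\<^sup>2"
      by (rule power_mono) simp
    then show ?thesis by simp
  qed
  have diff_support: "L + 1 < \<bar>x\<bar> \<Longrightarrow> (norm (G x - h n x))\<^sup>2 = 0" for n x
    using support[of x] h_support[of x n] by simp
  have "AE x in lborel. (\<lambda>n. (norm (G x - h n x))\<^sup>2) \<longlonglongrightarrow> 0"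
    using g_lim
  proof eventually_elim
    case (elim x)
    have "(\<lambda>n. clip M (g n x)) \<longlonglongrightarrow> clip M (G x)"
      by (rule continuous_on_tendsto_compose[OF continuous_on_clip elim]) auto
    then have "(\<lambda>n. h n x) \<longlonglongrightarrow> cutoff L x *\<^sub>R clip M (G x)"
      unfolding h_def by (intro tendsto_intros)
    also have "cutoff L x *\<^sub>R clip M (G x) = G x"
      using support[of x] bound[of x] cutoff_eq_one[of x L] M
      by (cases "\<bar>x\<bar> \<le> L") (auto simp: clip_eq_self)
    finally have "(\<lambda>n. (norm (G x - h n x))\<^sup>2) \<longlonglongrightarrow> (norm (G x - G x))\<^sup>2"
      by (intro tendsto_intros)
    then show ?case by simp
  qed
  then have "(\<lambda>n. LINT x|lborel. (norm (G x - h n x))\<^sup>2) \<longlonglongrightarrow> 0"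
    by (intro tendsto_integral_bounded_support[OF _ diff_bound diff_support]) measurable
  then obtain n where "(LINT x|lborel. (norm (G x - h n x))\<^sup>2) < e"
    using e by (auto dest!: LIMSEQ_D[where r=e])
  moreover have "integrable lborel (\<lambda>x. (norm (G x - h n x))\<^sup>2)"
    by (rule integrable_bounded_support[OF _ diff_bound diff_support]) measurable
  ultimately show ?thesis
    using h_cont h_bound h_support by (intro exI[of _ "h n"]) auto
qed

lemma L2_continuous_approx:
  fixes F :: "real \<Rightarrow> 'a::euclidean_space"
  assumes [measurable]: "F \<in> borel_measurable borel"
    and F2: "integrable lborel (\<lambda>x. (norm (F x))\<^sup>2)"
    and support: "\<And>x. L < \<bar>x\<bar> \<Longrightarrow> F x = 0" and e: "e > 0"
  obtains h B where "continuous_on UNIV h" "\<And>x. norm (h x) \<le> B" "\<And>x. L + 1 < \<bar>x\<bar> \<Longrightarrow> h x = 0"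
    "integrable lborel (\<lambda>x. (norm (F x - h x))\<^sup>2)" "(LINT x|lborel. (norm (F x - h x))\<^sup>2) < e"
proof -
  obtain M where M: "M > 0" and clip_integrable: "integrable lborel (\<lambda>x. (norm (F x - clip M (F x)))\<^sup>2)"
    and clip_small: "(LINT x|lborel. (norm (F x - clip M (F x)))\<^sup>2) < e / 4"
    using L2_clip_approx[OF _ F2, of "e / 4"] e by auto
  obtain h where h_cont: "continuous_on UNIV h" and h_bound: "\<forall>x. norm (h x) \<le> M"
    and h_support: "\<forall>x. L + 1 < \<bar>x\<bar> \<longrightarrow> h x = 0"
    and h_integrable: "integrable lborel (\<lambda>x. (norm (clip M (F x) - h x))\<^sup>2)"
    and h_small: "(LINT x|lborel. (norm (clip M (F x) - h x))\<^sup>2) < e / 4"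
    using L2_continuous_approx_bounded[of "\<lambda>x. clip M (F x)" M L "e / 4"] M e support
    by (auto simp: norm_clip_le)
  have [measurable]: "h \<in> borel_measurable borel"
    using h_cont by (rule borel_measurable_continuous_onI)
  have "(LINT x|lborel. (norm (F x - h x))\<^sup>2)
      \<le> 2 * (LINT x|lborel. (norm (F x - clip M (F x)))\<^sup>2) + 2 * (LINT x|lborel. (norm (clip M (F x) - h x))\<^sup>2)"
    by (rule integral_norm_sq_diff_le[OF _ _ clip_integrable h_integrable]) measurable
  also have "\<dots> < e"
    using clip_small h_small by simp
  finally show ?thesis
    using that h_cont h_bound h_support integrable_norm_sq_diff_trans[OF _ _ clip_integrable h_integrable] by auto
qed

section \<open>A Plancherel-type inequality\<close>

lemma integrable_of_L2_bounded_support: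
  fixes F :: "real \<Rightarrow> 'a::{banach, second_countable_topology}"
  assumes [measurable]: "F \<in> borel_measurable borel"
    and F2: "integrable lborel (\<lambda>x. (norm (F x))\<^sup>2)" and support: "\<And>x. L < \<bar>x\<bar> \<Longrightarrow> F x = 0"
  shows "integrable lborel F"
proof (rule Bochner_Integration.integrable_bound)
  show "integrable lborel (\<lambda>x. indicator {-L..L} x + (norm (F x))\<^sup>2)"
    using F2 by (intro Bochner_Integration.integrable_add) (simp_all add: integrable_indicator_iff emeasure_lborel_Icc_eq)
  show "AE x in lborel. norm (F x) \<le> norm (indicator {-L..L} x + (norm (F x))\<^sup>2 :: real)"
  proof (rule AE_I2)
    fix x
    have "2 * norm (F x) \<le> (norm (F x))\<^sup>2 + 1"
      using sum_squares_bound[of "norm (F x)" 1] by simp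
    then have "norm (F x) \<le> 1 + (norm (F x))\<^sup>2"
      using norm_ge_zero[of "F x"] by linarith
    then show "norm (F x) \<le> norm (indicator {-L..L} x + (norm (F x))\<^sup>2 :: real)"
      using support[of x] by (cases "x \<in> {-L..L}") auto
  qed
qed simp

lemma windowed_energy_le_diff:
  assumes h: "integrable lborel h" and F: "integrable lborel F" and R: "R > 0"
  shows "windowed_energy R h \<le> 2 * windowed_energy R F + 2 * windowed_energy R (\<lambda>x. h x - F x)"
proof -
  have "windowed_energy R h \<le> (LINT w|lborel. 2 * (gauss_window R w * (norm (fourier_transform F w))\<^sup>2)
      + 2 * (gauss_window R w * (norm (fourier_transform (\<lambda>x. h x - F x) w))\<^sup>2))"
    unfolding windowed_energy_def
  proof (rule integral_mono)
    fix w
    have "(norm (fourier_transform h w))\<^sup>2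
        \<le> 2 * (norm (fourier_transform F w))\<^sup>2 + 2 * (norm (fourier_transform (\<lambda>x. h x - F x) w))\<^sup>2"
      using le_two_sq_plus_two_sq[of "fourier_transform h w" 0 "fourier_transform F w"]
      by (simp add: fourier_transform_diff[OF h F] norm_minus_commute add.commute)
    then have "gauss_window R w * (norm (fourier_transform h w))\<^sup>2
        \<le> gauss_window R w * (2 * (norm (fourier_transform F w))\<^sup>2
          + 2 * (norm (fourier_transform (\<lambda>x. h x - F x) w))\<^sup>2)"
      by (rule mult_left_mono[OF _ gauss_window_nonneg])
    then show "gauss_window R w * (norm (fourier_transform h w))\<^sup>2
        \<le> 2 * (gauss_window R w * (norm (fourier_transform F w))\<^sup>2)
          + 2 * (gauss_window R w * (norm (fourier_transform (\<lambda>x. h x - F x) w))\<^sup>2)"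
      by (simp add: algebra_simps)
  qed (use integrable_windowed_energy[OF _ R] h F in auto)
  also have "\<dots> = 2 * windowed_energy R F + 2 * windowed_energy R (\<lambda>x. h x - F x)"
    unfolding windowed_energy_def
    using integrable_windowed_energy[OF F R] integrable_windowed_energy[of "\<lambda>x. h x - F x" R] h F R
    by simp
  finally show ?thesis .
qed

lemma L2_le_windowed_energy_bound:
  fixes F :: "real \<Rightarrow> complex"
  assumes [measurable]: "F \<in> borel_measurable borel"
    and F2: "integrable lborel (\<lambda>x. (norm (F x))\<^sup>2)" and support: "\<And>x. L < \<bar>x\<bar> \<Longrightarrow> F x = 0"
    and energy_bound: "\<And>R. R > 0 \<Longrightarrow> windowed_energy R F \<le> q"
  shows "(LINT x|lborel. (norm (F x))\<^sup>2) \<le> 2 * q / pi"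
proof (rule field_le_epsilon)
  fix e :: real
  assume "e > 0"
  then obtain h B where h_cont: "continuous_on UNIV h" and h_bound: "\<And>x. norm (h x) \<le> B"
    and h_support: "\<And>x. L + 1 < \<bar>x\<bar> \<Longrightarrow> h x = 0"
    and diff_integrable: "integrable lborel (\<lambda>x. (norm (F x - h x))\<^sup>2)"
    and diff_small: "(LINT x|lborel. (norm (F x - h x))\<^sup>2) < e / 6"
    using L2_continuous_approx[OF _ F2 support, where e="e / 6"] by auto
  define E where "E = (LINT x|lborel. (norm (F x - h x))\<^sup>2)"
  have [measurable]: "h \<in> borel_measurable borel"
    using h_cont by (rule borel_measurable_continuous_onI)
  have h_integrable: "integrable lborel h"
    by (rule integrable_bounded_support[OF _ h_bound h_support]) measurable
  have h2_integrable: "integrable lborel (\<lambda>x. (norm (h x))\<^sup>2)"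
    using h_bound order_trans[OF norm_ge_zero h_bound]
    by (intro integrable_bounded_support[where B="B\<^sup>2" and L="L + 1"]) (auto intro: power_mono h_support)
  have F_integrable: "integrable lborel F"
    by (rule integrable_of_L2_bounded_support[OF _ F2 support]) measurable
  have "windowed_energy (real (Suc n)) h \<le> 2 * q + 4 * pi * E" for n
  proof -
    have "windowed_energy (real (Suc n)) (\<lambda>x. h x - F x) \<le> 2 * pi * E"
      using windowed_energy_le_L2[of "\<lambda>x. h x - F x"] h_integrable F_integrable diff_integrable
      by (simp add: E_def norm_minus_commute)
    then show ?thesis
      using windowed_energy_le_diff[OF h_integrable F_integrable, of "real (Suc n)"]
        energy_bound[of "real (Suc n)"] by simp
  qed
  then have h_energy: "2 * pi * (LINT x|lborel. (norm (h x))\<^sup>2) \<le> 2 * q + 4 * pi * E"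
    by (intro LIMSEQ_le_const2[OF windowed_energy_tendsto[OF h_cont h_bound h_support]]) auto
  have "(LINT x|lborel. (norm (F x))\<^sup>2) \<le> 2 * E + 2 * (LINT x|lborel. (norm (h x))\<^sup>2)"
    using integral_norm_sq_diff_le[of F lborel "\<lambda>_. 0" h] diff_integrable h2_integrable
    by (simp add: E_def)
  also have "\<dots> \<le> 2 * E + (2 * q + 4 * pi * E) / pi"
    using h_energy by (simp add: field_simps)
  also have "\<dots> = 2 * q / pi + 6 * E"
    by (simp add: field_simps)
  also have "\<dots> \<le> 2 * q / pi + e"
    using diff_small by (simp add: E_def)
  finally show "(LINT x|lborel. (norm (F x))\<^sup>2) \<le> 2 * q / pi + e" .
qed

lemma L2_le_nn_integral_fourier:
  fixes F :: "real \<Rightarrow> complex"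
  assumes [measurable]: "F \<in> borel_measurable borel"
    and F2: "integrable lborel (\<lambda>x. (norm (F x))\<^sup>2)" and support: "\<And>x. L < \<bar>x\<bar> \<Longrightarrow> F x = 0"
  shows "ennreal (LINT x|lborel. (norm (F x))\<^sup>2)
    \<le> ennreal (2 / pi) * (\<integral>\<^sup>+w. ennreal ((norm (fourier_transform F w))\<^sup>2) \<partial>lborel)"
proof (cases "(\<integral>\<^sup>+w. ennreal ((norm (fourier_transform F w))\<^sup>2) \<partial>lborel)")
  case (real q)
  have F_integrable: "integrable lborel F"
    by (rule integrable_of_L2_bounded_support[OF _ F2 support]) measurable
  have "windowed_energy R F \<le> q" if "R > 0" for R
    using windowed_energy_le_nn_integral_fourier[OF F_integrable that] real
    by (simp add: ennreal_le_iff)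
  then have "(LINT x|lborel. (norm (F x))\<^sup>2) \<le> 2 / pi * q"
    using L2_le_windowed_energy_bound[OF _ F2 support] by simp
  then show ?thesis
    using real by (simp add: ennreal_mult[symmetric] ennreal_leI)
qed (simp add: ennreal_mult_top)

section \<open>The wave field at the boundary\<close>

lemma wave_field_boundary:
  fixes f :: "real \<Rightarrow> complex"
  assumes \<omega>: "\<omega> > 0" and s: "s = 1 \<or> s = -1"
  shows "wave_field f s \<omega> = \<i> * exp (\<i> * complex_of_real \<omega>) / complex_of_real (2 * \<omega>) *
    fourier_transform (\<lambda>x. indicator {-1<..<1} x *\<^sub>R f x) (- s * \<omega>)"
proof -
  define c where "c y = \<i> * exp (\<i> * complex_of_real (\<omega> * \<bar>s - y\<bar>)) / complex_of_real (2 * \<omega>)" for y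
  define K where "K = \<i> * exp (\<i> * complex_of_real \<omega>) / complex_of_real (2 * \<omega>)"
  have phase: "indicator {-1<..<1} y *\<^sub>R (c y * f y)
      = K * (iexp (- s * \<omega> * y) * (indicator {-1<..<1} y *\<^sub>R f y))" for y
  proof (cases "y \<in> {-1<..<1}")
    case True
    then have "\<omega> * \<bar>s - y\<bar> = \<omega> + - s * \<omega> * y"
      using s by (auto simp: algebra_simps)
    then have "exp (\<i> * complex_of_real (\<omega> * \<bar>s - y\<bar>)) = exp (\<i> * complex_of_real \<omega>) * iexp (- s * \<omega> * y)"
      by (simp only: of_real_add distrib_left exp_add)
    then show ?thesis using True unfolding c_def K_def by (simp add: mult_ac)
  qed simp
  have "wave_field f s \<omega> = (LINT y|lborel. indicator {-1..1} y *\<^sub>R (c y * f y))"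
    unfolding wave_field_def set_lebesgue_integral_def c_def ..
  also have "\<dots> = (LINT y|lborel. indicator {-1<..<1} y *\<^sub>R (c y * f y))"
    by (rule integral_discrete_difference[where X="{-1, 1}"]) (auto simp: indicator_def)
  also have "\<dots> = K * fourier_transform (\<lambda>x. indicator {-1<..<1} x *\<^sub>R f x) (- s * \<omega>)"
    unfolding phase fourier_transform_def by (rule integral_mult_right_zero)
  finally show ?thesis unfolding K_def .
qed

lemma wave_field_boundary_energy:
  fixes f :: "real \<Rightarrow> complex"
  assumes \<omega>: "\<omega> > 0"
  defines "F \<equiv> \<lambda>x. indicator {-1<..<1} x *\<^sub>R f x"
  shows "\<omega>\<^sup>2 * ((norm (wave_field f (-1) \<omega>))\<^sup>2 + (norm (wave_field f 1 \<omega>))\<^sup>2)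
    = (norm (fourier_transform F \<omega>))\<^sup>2 / 4 + (norm (fourier_transform F (- \<omega>)))\<^sup>2 / 4"
proof -
  define K where "K = \<i> * exp (\<i> * complex_of_real \<omega>) / complex_of_real (2 * \<omega>)"
  have "norm K = 1 / (2 * \<omega>)"
    using \<omega> by (simp add: K_def norm_divide norm_mult)
  then have K_sq: "\<omega>\<^sup>2 * (norm K)\<^sup>2 = 1 / 4"
    using \<omega> by (simp add: power_divide power_mult_distrib)
  have "wave_field f (-1) \<omega> = K * fourier_transform F \<omega>"
    using wave_field_boundary[OF \<omega>, of "-1" f] by (simp add: K_def F_def)
  moreover have "wave_field f 1 \<omega> = K * fourier_transform F (- \<omega>)"
    using wave_field_boundary[OF \<omega>, of 1 f] by (simp add: K_def F_def)
  ultimately have "\<omega>\<^sup>2 * ((norm (wave_field f (-1) \<omega>))\<^sup>2 + (norm (wave_field f 1 \<omega>))\<^sup>2)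
      = \<omega>\<^sup>2 * (norm K)\<^sup>2 * ((norm (fourier_transform F \<omega>))\<^sup>2 + (norm (fourier_transform F (- \<omega>)))\<^sup>2)"
    by (simp add: norm_mult power_mult_distrib algebra_simps)
  then show ?thesis
    unfolding K_sq by simp
qed

lemma nn_integral_Ioi_reflect:
  fixes G :: "real \<Rightarrow> real"
  assumes [measurable]: "G \<in> borel_measurable borel" and G_nonneg: "\<And>x. G x \<ge> 0"
  shows "(\<integral>\<^sup>+\<omega>\<in>{0<..}. ennreal (G \<omega> + G (- \<omega>)) \<partial>lborel) = (\<integral>\<^sup>+\<omega>. ennreal (G \<omega>) \<partial>lborel)"
proof -
  have reflect: "(\<integral>\<^sup>+\<omega>. ennreal (G (- \<omega>)) * indicator {0<..} \<omega> \<partial>lborel)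
      = (\<integral>\<^sup>+\<omega>. ennreal (G \<omega>) * indicator {..<0} \<omega> \<partial>lborel)"
  proof -
    have "(\<integral>\<^sup>+\<omega>. ennreal (G \<omega>) * indicator {..<0} \<omega> \<partial>lborel)
        = ennreal \<bar>-1\<bar> * (\<integral>\<^sup>+\<omega>. ennreal (G (0 + -1 * \<omega>)) * indicator {..<0} (0 + -1 * \<omega>) \<partial>lborel)"
      by (rule nn_integral_real_affine) auto
    also have "\<dots> = (\<integral>\<^sup>+\<omega>. ennreal (G (- \<omega>)) * indicator {0<..} \<omega> \<partial>lborel)"
      by (auto intro!: nn_integral_cong simp: indicator_def)
    finally show ?thesis by simp
  qed
  have "(\<integral>\<^sup>+\<omega>\<in>{0<..}. ennreal (G \<omega> + G (- \<omega>)) \<partial>lborel)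
      = (\<integral>\<^sup>+\<omega>. ennreal (G \<omega>) * indicator {0<..} \<omega> + ennreal (G (- \<omega>)) * indicator {0<..} \<omega> \<partial>lborel)"
    by (intro nn_integral_cong) (simp add: G_nonneg indicator_def)
  also have "\<dots> = (\<integral>\<^sup>+\<omega>. ennreal (G \<omega>) * indicator {0<..} \<omega> + ennreal (G \<omega>) * indicator {..<0} \<omega> \<partial>lborel)"
    by (simp add: nn_integral_add reflect)
  also have "\<dots> = (\<integral>\<^sup>+\<omega>. ennreal (G \<omega>) \<partial>lborel)"
  proof (rule nn_integral_cong_AE)
    show "AE \<omega> in lborel. ennreal (G \<omega>) * indicator {0<..} \<omega> + ennreal (G \<omega>) * indicator {..<0} \<omega> = ennreal (G \<omega>)"
      using AE_lborel_singleton[of 0] by eventually_elim (auto simp: indicator_def)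
  qed
  finally show ?thesis .
qed

lemma nn_integral_wave_field_boundary:
  fixes f :: "real \<Rightarrow> complex"
  assumes "set_borel_measurable lborel {-1<..<1} f"
  defines "F \<equiv> \<lambda>x. indicator {-1<..<1} x *\<^sub>R f x"
  shows "(\<integral>\<^sup>+\<omega>\<in>{0<..}. ennreal (\<omega>\<^sup>2 * ((norm (wave_field f (-1) \<omega>))\<^sup>2 + (norm (wave_field f 1 \<omega>))\<^sup>2)) \<partial>lborel)
    = ennreal (1 / 4) * (\<integral>\<^sup>+\<omega>. ennreal ((norm (fourier_transform F \<omega>))\<^sup>2) \<partial>lborel)"
proof -
  have [measurable]: "F \<in> borel_measurable borel"
    using assms unfolding set_borel_measurable_def F_def by simp
  let ?G = "\<lambda>\<omega>. (norm (fourier_transform F \<omega>))\<^sup>2 / 4"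
  have "(\<integral>\<^sup>+\<omega>\<in>{0<..}. ennreal (\<omega>\<^sup>2 * ((norm (wave_field f (-1) \<omega>))\<^sup>2 + (norm (wave_field f 1 \<omega>))\<^sup>2)) \<partial>lborel)
      = (\<integral>\<^sup>+\<omega>\<in>{0<..}. ennreal (?G \<omega> + ?G (- \<omega>)) \<partial>lborel)"
    by (intro nn_integral_cong) (simp add: wave_field_boundary_energy F_def indicator_def)
  also have "\<dots> = (\<integral>\<^sup>+\<omega>. ennreal (?G \<omega>) \<partial>lborel)"
    by (rule nn_integral_Ioi_reflect) simp_all
  also have "\<dots> = (\<integral>\<^sup>+\<omega>. ennreal (1 / 4) * ennreal ((norm (fourier_transform F \<omega>))\<^sup>2) \<partial>lborel)"
    by (intro nn_integral_cong) (simp flip: ennreal_mult)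
  also have "\<dots> = ennreal (1 / 4) * (\<integral>\<^sup>+\<omega>. ennreal ((norm (fourier_transform F \<omega>))\<^sup>2) \<partial>lborel)"
    by (rule nn_integral_cmult) simp
  finally show ?thesis .
qed

theorem lemma2p3:
  shows "\<exists>C::real. C > 0 \<and>
    (\<forall>f :: real \<Rightarrow> complex.
       set_borel_measurable lborel {-1<..<1} f \<longrightarrow>
       set_integrable lborel {-1<..<1} (\<lambda>y. (cmod (f y))\<^sup>2) \<longrightarrow>
       (\<exists>a<1. \<forall>y\<in>{-1<..<1}. a < \<bar>y\<bar> \<longrightarrow> f y = 0) \<longrightarrow>
       ennreal (LINT y:{-1<..<1}|lborel. (cmod (f y))\<^sup>2)
         \<le> ennreal C * (\<integral>\<^sup>+\<omega>\<in>{0<..}.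
              ennreal (\<omega>\<^sup>2 * ((cmod (wave_field f (-1) \<omega>))\<^sup>2
                              + (cmod (wave_field f 1 \<omega>))\<^sup>2)) \<partial>lborel))"
proof (intro exI[of _ "8 / pi"] conjI allI impI)
  fix f :: "real \<Rightarrow> complex"
  assume f_measurable: "set_borel_measurable lborel {-1<..<1} f"
    and f2: "set_integrable lborel {-1<..<1} (\<lambda>y. (cmod (f y))\<^sup>2)"
  define F where "F x = indicator {-1<..<1} x *\<^sub>R f x" for x
  have [measurable]: "F \<in> borel_measurable borel"
    using f_measurable unfolding set_borel_measurable_def F_def[abs_def] by simp
  have norm_F_sq: "(cmod (F x))\<^sup>2 = indicator {-1<..<1} x *\<^sub>R (cmod (f x))\<^sup>2" for x
    by (simp add: F_def indicator_def)
  have F2: "integrable lborel (\<lambda>x. (cmod (F x))\<^sup>2)"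
    using f2 unfolding set_integrable_def norm_F_sq .
  have "ennreal (LINT y:{-1<..<1}|lborel. (cmod (f y))\<^sup>2) = ennreal (LINT x|lborel. (cmod (F x))\<^sup>2)"
    unfolding set_lebesgue_integral_def norm_F_sq ..
  also have "\<dots> \<le> ennreal (2 / pi) * (\<integral>\<^sup>+\<omega>. ennreal ((cmod (fourier_transform F \<omega>))\<^sup>2) \<partial>lborel)"
    by (rule L2_le_nn_integral_fourier[OF _ F2, where L=1]) (measurable, auto simp: F_def indicator_def)
  also have "\<dots> = ennreal (8 / pi) * (ennreal (1 / 4) * (\<integral>\<^sup>+\<omega>. ennreal ((cmod (fourier_transform F \<omega>))\<^sup>2) \<partial>lborel))"
    by (simp add: mult.assoc[symmetric] flip: ennreal_mult)
  finally show "ennreal (LINT y:{-1<..<1}|lborel. (cmod (f y))\<^sup>2) \<le> ennreal (8 / pi) * (\<integral>\<^sup>+\<omega>\<in>{0<..}.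
      ennreal (\<omega>\<^sup>2 * ((cmod (wave_field f (-1) \<omega>))\<^sup>2 + (cmod (wave_field f 1 \<omega>))\<^sup>2)) \<partial>lborel)"
    unfolding nn_integral_wave_field_boundary[OF f_measurable] F_def .
qed simp

end
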